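(* Let $i\geq1$ and let $m$ be an integer with $5\nmid m$ such that $m=N_i(f)$ for some $f\in\mathbb Z[x]$. Then $m=N_i(1+(x-1)^3h(x))$ for some $h\in\mathbb Z[x]$. For $i=1$, moreover, given such $h$, there is $g\in\mathbb Z[x]$ with $5m=N_1(1-x+5g(x))$, and $5\nmid g(1)$ if $5\nmid h(1)$.
   Context: For $k\geq1$, $\omega_k=e^{2\pi i/5^k}$ and $N_k(F)=\prod_{1\leq j\leq 5^k,\ 5\nmid j}F(\omega_k^j)$. *)

theory Defs
  imports "HOL-Analysis.Analysis" "HOL-Computational_Algebra.Polynomial"
begin

definition omega5 :: "nat \<Rightarrow> complex" where
  "omega5 k = cis (2 * pi / real (5 ^ k))"

definition Nk :: "nat \<Rightarrow> int poly \<Rightarrow> complex" where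
  "Nk k F = (\<Prod>j \<in> {j \<in> {1..5 ^ k}. \<not> (5::nat) dvd j}.
               poly (map_poly of_int F) (omega5 k ^ j))"

end

theory Submission
  imports Defs "HOL-Number_Theory.Totient"
begin

text \<open>
  For k \<ge> 1 the norm N_k is multiplicative, it does not change when a multiple of the cyclotomic
  polynomial Phi of order 5^k is added, and N_k(a - x) = Phi(a); hence N_k(x) = N_k(1 + x) = 1
  and N_k(1 - x) = 5. Put t = x - 1. Since 5 lies in the ideal (t^3, Phi), it suffices to find
  u = (1 + x)^a x^b with u f = 1 modulo (t^3, 5): then u f = 1 + t^3 h + Phi S, and so
  N_k(f) = N_k(1 + t^3 h). Such a u exists because f(1) is prime to 5, as
  f(1)^(4 * 5^(k-1)) = N_k(f) modulo 5, and because the classes of 1 + x = 2 + t and x = 1 + t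
  generate the unit group of F_5[t]/(t^3). For k = 1 one has
  (1 - x)(1 + t^3 h) = 1 - x + 5 g modulo Phi with g = (1 + 2t + 2t^2 + t^3) h, so g(1) = h(1).
\<close>

lemma map_poly_of_int_add [simp]:
  "map_poly (of_int :: int \<Rightarrow> 'a::comm_ring_1) (p + q) = map_poly of_int p + map_poly of_int q"
  by (rule poly_eqI) (simp add: coeff_map_poly)

lemma map_poly_of_int_diff [simp]:
  "map_poly (of_int :: int \<Rightarrow> 'a::comm_ring_1) (p - q) = map_poly of_int p - map_poly of_int q"
  by (rule poly_eqI) (simp add: coeff_map_poly)

lemma map_poly_of_int_uminus [simp]:
  "map_poly (of_int :: int \<Rightarrow> 'a::comm_ring_1) (- p) = - map_poly of_int p"
  by (rule poly_eqI) (simp add: coeff_map_poly)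

lemma map_poly_of_int_mult [simp]:
  "map_poly (of_int :: int \<Rightarrow> 'a::comm_ring_1) (p * q) = map_poly of_int p * map_poly of_int q"
  by (induction p) (simp_all add: map_poly_pCons map_poly_smult)

lemma map_poly_of_int_power [simp]:
  "map_poly (of_int :: int \<Rightarrow> 'a::comm_ring_1) (p ^ n) = map_poly of_int p ^ n"
  by (induction n) simp_all

lemma map_poly_of_int_prod:
  "map_poly (of_int :: int \<Rightarrow> 'a::comm_ring_1) (prod f A) = (\<Prod>x\<in>A. map_poly of_int (f x))"
  by (induction A rule: infinite_finite_induct) simp_all

lemma map_poly_of_int_pcompose:
  "map_poly (of_int :: int \<Rightarrow> 'a::comm_ring_1) (pcompose p q)
     = pcompose (map_poly of_int p) (map_poly of_int q)"
  by (induction p) (simp_all add: pcompose_pCons map_poly_pCons)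

lemma poly_map_poly_of_int:
  "poly (map_poly of_int p) (of_int x :: 'a::comm_ring_1) = of_int (poly p x)"
  by (induction p) (simp_all add: map_poly_pCons)

section \<open>Primitive 5^k-th roots of unity\<close>

lemma omega5_power: "omega5 k ^ n = exp (2 * of_real pi * \<i> * of_nat n / of_nat (5 ^ k))"
  by (simp add: omega5_def cis_conv_exp exp_of_nat_mult[symmetric] field_simps)

lemma omega5_power_eq_iff: "omega5 k ^ a = omega5 k ^ b \<longleftrightarrow> [a = b] (mod 5 ^ k)"
  unfolding omega5_power cong_def by (rule complex_root_unity_eq) simp

lemma omega5_power_eq_1_iff: "omega5 k ^ a = 1 \<longleftrightarrow> 5 ^ k dvd a"
  using omega5_power_eq_iff[of k a 0] by (simp add: cong_0_iff)

lemma totatives_5_power: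
  assumes "k \<ge> 1"
  shows "totatives (5 ^ k) = {j \<in> {1..5 ^ k}. \<not> 5 dvd j}"
proof -
  have "coprime j ((5::nat) ^ k) \<longleftrightarrow> \<not> 5 dvd j" for j
    using assms prime_imp_coprime[of 5 j] coprime_common_divisor[of 5 j 5]
    by (auto simp: coprime_commute[of j])
  then show ?thesis
    unfolding totatives_def by (force simp: Suc_le_eq)
qed

lemma totatives_5_power_not_dvd: "k \<ge> 1 \<Longrightarrow> j \<in> totatives (5 ^ k) \<Longrightarrow> \<not> 5 dvd j"
  by (simp add: totatives_5_power)

lemma card_totatives_5_power: "k \<ge> 1 \<Longrightarrow> card (totatives (5 ^ k)) = 4 * 5 ^ (k - 1)"
  using totient_prime_power[of 5 k] by (simp add: totient_def)

lemma Nk_eq_prod_totatives: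
  "k \<ge> 1 \<Longrightarrow> Nk k F = (\<Prod>j\<in>totatives (5 ^ k). poly (map_poly of_int F) (omega5 k ^ j))"
  by (simp add: Nk_def totatives_5_power)

lemma Nk_mult: "Nk k (P * Q) = Nk k P * Nk k Q"
  by (simp add: Nk_def prod.distrib)

lemma Nk_power: "Nk k (P ^ n) = Nk k P ^ n"
  by (simp add: Nk_def prod_power_distrib)

lemma inj_on_omega5_power: "inj_on (\<lambda>j. omega5 k ^ j) (totatives (5 ^ k))"
proof (rule inj_onI)
  fix a b assume a: "a \<in> totatives (5 ^ k)" and b: "b \<in> totatives (5 ^ k)"
    and "omega5 k ^ a = omega5 k ^ b"
  then have ab: "a mod 5 ^ k = b mod 5 ^ k" by (simp add: omega5_power_eq_iff cong_def)
  show "a = b"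
  proof (cases "k = 0")
    case True
    with a b show ?thesis by (simp add: in_totatives_iff)
  next
    case False
    then have "(1::nat) < 5 ^ k" using one_less_power[of "5::nat" k] by simp
    with a b have "a < 5 ^ k" "b < 5 ^ k" by (simp_all add: totatives_less)
    with ab show ?thesis by simp
  qed
qed

lemma bij_betw_mult_mod_totatives:
  assumes n: "n > 1" and a: "coprime a n"
  shows "bij_betw (\<lambda>j. a * j mod n) (totatives n) (totatives n)"
proof -
  have into: "a * j mod n \<in> totatives n" if j: "j \<in> totatives n" for j
  proof -
    have "coprime (a * j) n" using a j by (simp add: in_totatives_iff)
    then have c: "coprime (a * j mod n) n" using n by simp
    moreover have "a * j mod n \<noteq> 0"
      using c n by (intro notI) simp
    ultimately show ?thesis using n by (simp add: in_totatives_iff)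
  qed
  have inj: "inj_on (\<lambda>j. a * j mod n) (totatives n)"
  proof (rule inj_onI)
    fix i j assume "i \<in> totatives n" "j \<in> totatives n" "a * i mod n = a * j mod n"
    moreover have "[a * i = a * j] (mod n) \<longleftrightarrow> [i = j] (mod n)"
      using a by (rule cong_mult_lcancel_nat)
    ultimately show "i = j" using n by (simp add: cong_def totatives_less)
  qed
  have "(\<lambda>j. a * j mod n) ` totatives n = totatives n"
    using into by (intro endo_inj_surj[OF _ _ inj]) auto
  with inj show ?thesis by (simp add: bij_betw_def)
qed

lemma prod_omega5_power_mult_reindex:
  assumes k: "k \<ge> 1" and a: "\<not> 5 dvd a"
  shows "(\<Prod>j\<in>totatives (5 ^ k). g (omega5 k ^ (a * j)))
       = (\<Prod>j\<in>totatives (5 ^ k). g (omega5 k ^ j))"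
proof -
  have "coprime a (5 ^ k)"
    using a prime_imp_coprime[of 5 a] by (simp add: coprime_commute)
  moreover have "(1::nat) < 5 ^ k" using one_less_power[of "5::nat" k] k by simp
  ultimately have "bij_betw (\<lambda>j. a * j mod 5 ^ k) (totatives (5 ^ k)) (totatives (5 ^ k))"
    by (rule bij_betw_mult_mod_totatives[rotated])
  then have "(\<Prod>j\<in>totatives (5 ^ k). g (omega5 k ^ (a * j mod 5 ^ k)))
      = (\<Prod>j\<in>totatives (5 ^ k). g (omega5 k ^ j))"
    by (rule prod.reindex_bij_betw)
  moreover have "omega5 k ^ (a * j mod 5 ^ k) = omega5 k ^ (a * j)" for j
    by (simp add: omega5_power_eq_iff)
  ultimately show ?thesis by simp
qed

section \<open>The cyclotomic polynomial of order 5^k\<close>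

definition cyclotomic5 :: "nat \<Rightarrow> int poly" where
  "cyclotomic5 k = pcompose [:1, 1, 1, 1, 1:] ([:0, 1:] ^ 5 ^ (k - 1))"

lemma poly_cyclotomic5: "poly (cyclotomic5 k) x = poly [:1, 1, 1, 1, 1:] (x ^ 5 ^ (k - 1))"
  by (simp add: cyclotomic5_def poly_pcompose)

lemma poly_map_cyclotomic5:
  "poly (map_poly of_int (cyclotomic5 k)) (z :: 'a::comm_ring_1) = poly [:1, 1, 1, 1, 1:] (z ^ 5 ^ (k - 1))"
  unfolding cyclotomic5_def map_poly_of_int_pcompose poly_pcompose by (simp add: map_poly_pCons)

lemma poly_cyclotomic5_1: "poly (cyclotomic5 k) 1 = 5"
  by (simp add: poly_cyclotomic5)

lemma degree_cyclotomic5: "degree (cyclotomic5 k) = 4 * 5 ^ (k - 1)"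
  by (simp add: cyclotomic5_def degree_pcompose degree_linear_power[of 0, simplified])

lemma lead_coeff_cyclotomic5: "lead_coeff (cyclotomic5 k) = 1"
proof -
  have "lead_coeff ([:0, 1:] ^ n :: int poly) = 1" for n
    by (simp add: lead_coeff_power)
  then show ?thesis
    by (simp add: cyclotomic5_def lead_coeff_comp degree_linear_power[of 0, simplified])
qed

lemma cyclotomic5_omega5_power_root:
  assumes k: "k \<ge> 1" and j: "\<not> 5 dvd j"
  shows "poly (map_poly of_int (cyclotomic5 k)) (omega5 k ^ j) = 0"
proof -
  define y where "y = (omega5 k ^ j) ^ 5 ^ (k - 1)"
  have k5: "(5::nat) ^ k = 5 ^ (k - 1) * 5" using k by (cases k) simp_all
  have "y ^ 5 = 1"
    by (simp add: y_def omega5_power_eq_1_iff k5 power_mult[symmetric])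
  moreover have "y \<noteq> 1"
    using j by (simp add: y_def omega5_power_eq_1_iff k5 power_mult[symmetric])
  moreover have "(y - 1) * poly [:1, 1, 1, 1, 1:] y = y ^ 5 - 1"
    by (simp add: algebra_simps numeral_eq_Suc)
  ultimately show ?thesis by (simp add: poly_map_cyclotomic5 y_def)
qed

lemma poly_eq_0_of_vanishing_on_primitive_roots:
  fixes P :: "complex poly"
  assumes k: "k \<ge> 1" and deg: "degree P < 4 * 5 ^ (k - 1)"
    and roots: "\<And>j. j \<in> totatives (5 ^ k) \<Longrightarrow> poly P (omega5 k ^ j) = 0"
  shows "P = 0"
proof (rule ccontr)
  assume "P \<noteq> 0"
  have "4 * 5 ^ (k - 1) = card ((\<lambda>j. omega5 k ^ j) ` totatives (5 ^ k))"
    using k by (simp add: card_image inj_on_omega5_power card_totatives_5_power)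
  also have "\<dots> \<le> card {z. poly P z = 0}"
    using roots by (intro card_mono poly_roots_finite[OF \<open>P \<noteq> 0\<close>]) auto
  also have "\<dots> \<le> degree P" by (rule card_poly_roots_bound[OF \<open>P \<noteq> 0\<close>])
  finally show False using deg by simp
qed

lemma map_cyclotomic5_eq_prod:
  assumes k: "k \<ge> 1"
  shows "map_poly of_int (cyclotomic5 k) = (\<Prod>j\<in>totatives (5 ^ k). [:- (omega5 k ^ j), 1:])"
    (is "?A = ?B")
proof -
  define n :: nat where "n = 4 * 5 ^ (k - 1)"
  have deg: "degree ?A = n" "degree ?B = n"
    using k by (simp_all add: n_def degree_map_poly degree_cyclotomic5 degree_prod_sum_eq
        card_totatives_5_power)
  have "lead_coeff ?A = 1" "lead_coeff ?B = 1"
    by (simp_all add: degree_map_poly coeff_map_poly lead_coeff_cyclotomic5 lead_coeff_prod)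
  with deg have "?A - ?B = 0 \<or> degree (?A - ?B) < n"
    by (intro eq_zero_or_degree_less degree_diff_le) simp_all
  then have "degree (?A - ?B) < 4 * 5 ^ (k - 1)"
    by (auto simp: n_def)
  moreover have "poly (?A - ?B) (omega5 k ^ j) = 0" if j: "j \<in> totatives (5 ^ k)" for j
  proof -
    have "poly ?B (omega5 k ^ j) = 0"
      using j by (auto simp: poly_prod)
    then show ?thesis
      using cyclotomic5_omega5_power_root[OF k totatives_5_power_not_dvd[OF k j]] by simp
  qed
  ultimately have "?A - ?B = 0" by (rule poly_eq_0_of_vanishing_on_primitive_roots[OF k])
  then show ?thesis by simp
qed

lemma cyclotomic5_dvd_of_vanishing_on_primitive_roots:
  assumes k: "k \<ge> 1"
    and roots: "\<And>j. j \<in> totatives (5 ^ k) \<Longrightarrow> poly (map_poly of_int G) (omega5 k ^ j) = 0"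
  shows "cyclotomic5 k dvd G"
proof -
  obtain q r where qr: "pseudo_divmod G (cyclotomic5 k) = (q, r)" by fastforce
  have "cyclotomic5 k \<noteq> 0" using lead_coeff_cyclotomic5[of k] by auto
  from pseudo_divmod[OF this qr] have G: "G = cyclotomic5 k * q + r"
    and r: "r = 0 \<or> degree r < 4 * 5 ^ (k - 1)"
    by (simp_all only: lead_coeff_cyclotomic5 power_one smult_1_left flip: degree_cyclotomic5)
  have "map_poly (of_int :: int \<Rightarrow> complex) r = 0"
  proof (rule poly_eq_0_of_vanishing_on_primitive_roots[OF k])
    show "degree (map_poly (of_int :: int \<Rightarrow> complex) r) < 4 * 5 ^ (k - 1)"
      using r by (auto simp: degree_map_poly)
    show "poly (map_poly of_int r) (omega5 k ^ j) = 0" if "j \<in> totatives (5 ^ k)" for j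
      using roots[OF that] cyclotomic5_omega5_power_root[OF k totatives_5_power_not_dvd[OF k that]]
      by (simp add: G)
  qed
  then show ?thesis by (simp add: G map_poly_eq_0_iff)
qed

lemma Nk_add_cyclotomic5_mult:
  assumes k: "k \<ge> 1"
  shows "Nk k (P + cyclotomic5 k * S) = Nk k P"
  unfolding Nk_eq_prod_totatives[OF k]
  by (intro prod.cong refl)
    (simp add: cyclotomic5_omega5_power_root[OF k] totatives_5_power_not_dvd[OF k])

lemma Nk_linear: "k \<ge> 1 \<Longrightarrow> Nk k [:a, -1:] = of_int (poly (cyclotomic5 k) a)"
  by (simp add: Nk_eq_prod_totatives map_cyclotomic5_eq_prod poly_prod map_poly_pCons
      flip: poly_map_poly_of_int)

lemma Nk_uminus:
  assumes k: "k \<ge> 1"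
  shows "Nk k (- P) = Nk k P"
proof -
  have "even (card (totatives (5 ^ k)))" using k by (simp add: card_totatives_5_power)
  then show ?thesis by (simp add: Nk_eq_prod_totatives[OF k] prod_uminus)
qed

lemma Nk_X: "k \<ge> 1 \<Longrightarrow> Nk k [:0, 1:] = 1"
  using Nk_linear[of k 0] Nk_uminus[of k "[:0, -1:]"] by (simp add: poly_cyclotomic5)

lemma Nk_1_plus_X: "k \<ge> 1 \<Longrightarrow> Nk k [:1, 1:] = 1"
  using Nk_linear[of k "-1"] Nk_uminus[of k "[:-1, -1:]"] by (simp add: poly_cyclotomic5)

lemma Nk_1_minus_X: "k \<ge> 1 \<Longrightarrow> Nk k [:1, -1:] = 5"
  using Nk_linear[of k 1] by (simp add: poly_cyclotomic5)

lemma Nk_cong_poly_1_power: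
  assumes k: "k \<ge> 1" and m: "of_int m = Nk k f"
  shows "[poly f 1 ^ (4 * 5 ^ (k - 1)) = m] (mod 5)"
proof -
  define F where "F = (\<Prod>j\<in>totatives (5 ^ k). pcompose f ([:0, 1:] ^ j))"
  have "poly (map_poly of_int (F - [:m:])) (omega5 k ^ a) = 0" if a: "a \<in> totatives (5 ^ k)" for a
  proof -
    have "poly (map_poly of_int F) (omega5 k ^ a)
        = (\<Prod>j\<in>totatives (5 ^ k). poly (map_poly of_int f) (omega5 k ^ (a * j)))"
      by (simp add: F_def map_poly_of_int_prod map_poly_of_int_pcompose poly_prod poly_pcompose
          map_poly_pCons power_mult)
    also have "\<dots> = Nk k f"
      using prod_omega5_power_mult_reindex[OF k totatives_5_power_not_dvd[OF k a]]
      by (simp add: Nk_eq_prod_totatives[OF k])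
    finally show ?thesis using m by (simp add: map_poly_pCons)
  qed
  then obtain q where "F - [:m:] = cyclotomic5 k * q"
    using cyclotomic5_dvd_of_vanishing_on_primitive_roots[OF k] by blast
  then have "poly (F - [:m:]) 1 = poly (cyclotomic5 k * q) 1" by (rule arg_cong)
  then have "poly F 1 - m = 5 * poly q 1" by (simp add: poly_cyclotomic5_1)
  moreover have "poly F 1 = poly f 1 ^ (4 * 5 ^ (k - 1))"
    using k by (simp add: F_def poly_prod poly_pcompose card_totatives_5_power)
  ultimately show ?thesis by (simp add: cong_iff_dvd_diff)
qed

section \<open>Congruences modulo (t^3, 5)\<close>

definition cong_t3_5 :: "int poly \<Rightarrow> int poly \<Rightarrow> bool" where
  "cong_t3_5 P Q \<longleftrightarrow> (\<exists>A B. P - Q = [:-1, 1:] ^ 3 * A + 5 * B)"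

definition quad_t :: "int \<Rightarrow> int \<Rightarrow> int \<Rightarrow> int poly" where
  "quad_t a0 a1 a2 = of_int a0 + of_int a1 * [:-1, 1:] + of_int a2 * [:-1, 1:] ^ 2"

lemma cong_t3_5_refl: "cong_t3_5 P P"
  unfolding cong_t3_5_def by (intro exI[of _ 0]) simp

lemma cong_t3_5_add:
  assumes "cong_t3_5 P Q" "cong_t3_5 P' Q'"
  shows "cong_t3_5 (P + P') (Q + Q')"
proof -
  obtain A B A' B' where "P - Q = [:-1, 1:] ^ 3 * A + 5 * B" "P' - Q' = [:-1, 1:] ^ 3 * A' + 5 * B'"
    using assms unfolding cong_t3_5_def by blast
  then have "P + P' - (Q + Q') = [:-1, 1:] ^ 3 * (A + A') + 5 * (B + B')"
    by (simp add: algebra_simps)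
  then show ?thesis unfolding cong_t3_5_def by blast
qed

lemma cong_t3_5_mult:
  assumes "cong_t3_5 P Q" "cong_t3_5 P' Q'"
  shows "cong_t3_5 (P * P') (Q * Q')"
proof -
  obtain A B A' B' where "P - Q = [:-1, 1:] ^ 3 * A + 5 * B" "P' - Q' = [:-1, 1:] ^ 3 * A' + 5 * B'"
    using assms unfolding cong_t3_5_def by blast
  then have "P * P' - Q * Q' = [:-1, 1:] ^ 3 * (A * P' + Q * A') + 5 * (B * P' + Q * B')"
    by (simp add: algebra_simps)
  then show ?thesis unfolding cong_t3_5_def by blast
qed

lemma cong_t3_5_trans: "cong_t3_5 P Q \<Longrightarrow> cong_t3_5 Q R \<Longrightarrow> cong_t3_5 P R"
  using cong_t3_5_add[of P Q Q R] by (simp add: cong_t3_5_def)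

lemma cong_t3_5_quad_t_mult:
  assumes P: "cong_t3_5 P (quad_t a0 a1 a2)" and Q: "cong_t3_5 Q (quad_t b0 b1 b2)"
    and "[c0 = a0 * b0] (mod 5)" "[c1 = a0 * b1 + a1 * b0] (mod 5)"
    and "[c2 = a0 * b2 + a1 * b1 + a2 * b0] (mod 5)"
  shows "cong_t3_5 (P * Q) (quad_t c0 c1 c2)"
proof -
  obtain d0 d1 d2 where d: "c0 = a0 * b0 + 5 * d0" "c1 = a0 * b1 + a1 * b0 + 5 * d1"
    "c2 = a0 * b2 + a1 * b1 + a2 * b0 + 5 * d2"
    using assms(3-5) by (metis cong_iff_lin cong_sym)
  define t :: "int poly" where "t = [:-1, 1:]"
  have "quad_t a0 a1 a2 * quad_t b0 b1 b2 - quad_t c0 c1 c2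
      = t ^ 3 * (of_int (a1 * b2 + a2 * b1) + of_int (a2 * b2) * t) + 5 * - quad_t d0 d1 d2"
    unfolding quad_t_def t_def[symmetric] d
    by (simp add: algebra_simps power2_eq_square power3_eq_cube)
  then have "cong_t3_5 (quad_t a0 a1 a2 * quad_t b0 b1 b2) (quad_t c0 c1 c2)"
    unfolding cong_t3_5_def t_def by blast
  with cong_t3_5_mult[OF P Q] show ?thesis by (rule cong_t3_5_trans)
qed

lemma cong_t3_5_X: "cong_t3_5 [:0, 1:] (quad_t 1 1 0)"
  by (simp add: quad_t_def one_pCons cong_t3_5_refl)

lemma cong_t3_5_1_plus_X: "cong_t3_5 [:1, 1:] (quad_t 2 1 0)"
  by (simp add: quad_t_def numeral_poly cong_t3_5_refl)

lemma cong_t3_5_taylor: "\<exists>c1 c2. cong_t3_5 f (quad_t (poly f 1) c1 c2)"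
proof (induction f)
  case 0
  have "quad_t 0 0 0 = 0" by (simp add: quad_t_def)
  then show ?case by (metis cong_t3_5_refl poly_0)
next
  case (pCons a p)
  then obtain c1 c2 where "cong_t3_5 p (quad_t (poly p 1) c1 c2)" by blast
  then have "cong_t3_5 ([:0, 1:] * p) (quad_t (poly p 1) (poly p 1 + c1) (c1 + c2))"
    by (rule cong_t3_5_quad_t_mult[OF cong_t3_5_X]) (simp_all add: ac_simps)
  then have "cong_t3_5 ([:a:] + [:0, 1:] * p) ([:a:] + quad_t (poly p 1) (poly p 1 + c1) (c1 + c2))"
    by (rule cong_t3_5_add[OF cong_t3_5_refl])
  moreover have "[:a:] + quad_t (poly p 1) c1' c2' = quad_t (poly (pCons a p) 1) c1' c2'" for c1' c2'
    by (simp add: quad_t_def of_int_poly)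
  ultimately show ?case by auto
qed

lemma cong_t3_5_X_power: "\<exists>c. cong_t3_5 ([:0, 1:] ^ n) (quad_t 1 (int n) c)"
proof (induction n)
  case 0
  show ?case by (intro exI[of _ 0]) (simp add: quad_t_def cong_t3_5_refl)
next
  case (Suc n)
  then obtain c where "cong_t3_5 ([:0, 1:] ^ n) (quad_t 1 (int n) c)" by blast
  then have "cong_t3_5 ([:0, 1:] * [:0, 1:] ^ n) (quad_t 1 (int (Suc n)) (c + int n))"
    by (rule cong_t3_5_quad_t_mult[OF cong_t3_5_X]) (simp_all add: ac_simps)
  then show ?case by auto
qed

lemma cong_t3_5_1_plus_X_power: "\<exists>c1 c2. cong_t3_5 ([:1, 1:] ^ n) (quad_t (2 ^ n) c1 c2)"
proof (induction n)
  case 0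
  show ?case by (intro exI[of _ 0]) (simp add: quad_t_def cong_t3_5_refl)
next
  case (Suc n)
  then obtain c1 c2 where "cong_t3_5 ([:1, 1:] ^ n) (quad_t (2 ^ n) c1 c2)" by blast
  then have "cong_t3_5 ([:1, 1:] * [:1, 1:] ^ n) (quad_t (2 ^ Suc n) (2 * c1 + 2 ^ n) (2 * c2 + c1))"
    by (rule cong_t3_5_quad_t_mult[OF cong_t3_5_1_plus_X]) simp_all
  then show ?case by auto
qed

lemma cong_t3_5_quadratic_unit: "cong_t3_5 ([:1, 1:] ^ 4 * [:0, 1:] ^ 3) (quad_t 1 0 3)"
proof -
  have A2: "cong_t3_5 ([:1, 1:] * [:1, 1:]) (quad_t 4 4 1)"
    by (rule cong_t3_5_quad_t_mult[OF cong_t3_5_1_plus_X cong_t3_5_1_plus_X]) simp_all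
  have A4: "cong_t3_5 (([:1, 1:] * [:1, 1:]) * ([:1, 1:] * [:1, 1:])) (quad_t 1 2 4)"
    by (rule cong_t3_5_quad_t_mult[OF A2 A2]) (simp_all add: cong_def)
  have B2: "cong_t3_5 ([:0, 1:] * [:0, 1:]) (quad_t 1 2 1)"
    by (rule cong_t3_5_quad_t_mult[OF cong_t3_5_X cong_t3_5_X]) simp_all
  have B3: "cong_t3_5 (([:0, 1:] * [:0, 1:]) * [:0, 1:]) (quad_t 1 3 3)"
    by (rule cong_t3_5_quad_t_mult[OF B2 cong_t3_5_X]) simp_all
  have "cong_t3_5 (([:1, 1:] * [:1, 1:]) * ([:1, 1:] * [:1, 1:]) * (([:0, 1:] * [:0, 1:]) * [:0, 1:]))
      (quad_t 1 0 3)"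
    by (rule cong_t3_5_quad_t_mult[OF A4 B3]) (simp_all add: cong_def)
  then show ?thesis by (simp add: power4_eq_xxxx power3_eq_cube mult.assoc)
qed

lemma cong_t3_5_quadratic_unit_power:
  "cong_t3_5 (([:1, 1:] ^ 4 * [:0, 1:] ^ 3) ^ n) (quad_t 1 0 (3 * int n))"
proof (induction n)
  case 0
  show ?case by (simp add: quad_t_def cong_t3_5_refl)
next
  case (Suc n)
  show ?case
    using cong_t3_5_quad_t_mult[OF cong_t3_5_quadratic_unit Suc] by (simp add: algebra_simps)
qed

lemma exists_power_2_inverse_mod_5:
  fixes c :: int
  assumes "\<not> 5 dvd c"
  shows "\<exists>a. [2 ^ a * c = 1] (mod 5)"
proof -
  have "[2 ^ a * c = 2 ^ a * (c mod 5)] (mod 5)" for a :: nat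
    by (simp add: cong_def mod_mult_right_eq)
  moreover have "c mod 5 = 1 \<or> c mod 5 = 2 \<or> c mod 5 = 3 \<or> c mod 5 = 4"
    using assms by presburger
  then have "\<exists>a. [2 ^ a * (c mod 5) = 1] (mod 5)"
    by (auto simp: cong_def intro: exI[of _ 0] exI[of _ 3] exI[of _ 1] exI[of _ 2])
  ultimately show ?thesis by (meson cong_trans)
qed

lemma cong_t3_5_normalize_constant:
  assumes c0: "\<not> 5 dvd c0" and P: "cong_t3_5 P (quad_t c0 c1 c2)"
  shows "\<exists>a d1 d2. cong_t3_5 ([:1, 1:] ^ a * P) (quad_t 1 d1 d2)"
proof -
  obtain a where a: "[2 ^ a * c0 = 1] (mod 5)"
    using exists_power_2_inverse_mod_5[OF c0] by blast
  obtain e1 e2 where "cong_t3_5 ([:1, 1:] ^ a) (quad_t (2 ^ a) e1 e2)"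
    using cong_t3_5_1_plus_X_power by blast
  then have "cong_t3_5 ([:1, 1:] ^ a * P)
      (quad_t 1 (2 ^ a * c1 + e1 * c0) (2 ^ a * c2 + e1 * c1 + e2 * c0))"
    by (rule cong_t3_5_quad_t_mult[OF _ P]) (simp_all add: a cong_sym)
  then show ?thesis by blast
qed

lemma cong_t3_5_normalize_linear:
  assumes P: "cong_t3_5 P (quad_t 1 d1 d2)"
  shows "\<exists>b e. cong_t3_5 ([:0, 1:] ^ b * P) (quad_t 1 0 e)"
proof -
  define b where "b = nat (- d1 mod 5)"
  obtain c where "cong_t3_5 ([:0, 1:] ^ b) (quad_t 1 (int b) c)"
    using cong_t3_5_X_power by blast
  then have "cong_t3_5 ([:0, 1:] ^ b * P) (quad_t 1 0 (d2 + int b * d1 + c))"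
    by (rule cong_t3_5_quad_t_mult[OF _ P]) (simp_all add: b_def cong_def mod_add_right_eq)
  then show ?thesis by blast
qed

lemma cong_t3_5_normalize_quadratic:
  assumes P: "cong_t3_5 P (quad_t 1 0 e)"
  shows "\<exists>a b. cong_t3_5 ([:1, 1:] ^ a * [:0, 1:] ^ b * P) 1"
proof -
  define c where "c = nat (3 * e mod 5)"
  have "[0 = e + 3 * int c] (mod 5)"
    unfolding c_def cong_def by simp presburger
  then have "cong_t3_5 (([:1, 1:] ^ 4 * [:0, 1:] ^ 3) ^ c * P) (quad_t 1 0 0)"
    by (intro cong_t3_5_quad_t_mult[OF cong_t3_5_quadratic_unit_power P]) simp_all
  moreover have "quad_t 1 0 0 = 1" by (simp add: quad_t_def)
  moreover have "([:1, 1:] ^ 4 * [:0, 1:] ^ 3) ^ c = [:1, 1:] ^ (4 * c) * [:0, 1:] ^ (3 * c)"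
    by (simp add: power_mult_distrib power_mult)
  ultimately show ?thesis by metis
qed

lemma exists_unit_multiple_cong_t3_5_1:
  assumes "\<not> 5 dvd poly f 1"
  shows "\<exists>a b. cong_t3_5 ([:1, 1:] ^ a * [:0, 1:] ^ b * f) 1"
proof -
  obtain c1 c2 where "cong_t3_5 f (quad_t (poly f 1) c1 c2)"
    using cong_t3_5_taylor by blast
  then obtain a1 d1 d2 where "cong_t3_5 ([:1, 1:] ^ a1 * f) (quad_t 1 d1 d2)"
    using cong_t3_5_normalize_constant[OF assms] by blast
  then obtain b1 e where "cong_t3_5 ([:0, 1:] ^ b1 * ([:1, 1:] ^ a1 * f)) (quad_t 1 0 e)"
    using cong_t3_5_normalize_linear by blast
  then obtain a2 b2 where
    "cong_t3_5 ([:1, 1:] ^ a2 * [:0, 1:] ^ b2 * ([:0, 1:] ^ b1 * ([:1, 1:] ^ a1 * f))) 1"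
    using cong_t3_5_normalize_quadratic by blast
  then have "cong_t3_5 ([:1, 1:] ^ (a2 + a1) * [:0, 1:] ^ (b2 + b1) * f) 1"
    by (simp add: power_add ac_simps)
  then show ?thesis by blast
qed

lemma five_in_ideal_cyclotomic5_t3: "\<exists>A B. (5 :: int poly) = cyclotomic5 k * A + [:-1, 1:] ^ 3 * B"
proof -
  \<comment> \<open>With s and w as below, Phi(1 + s) = 5 (1 + w) + s^4 and (1 + w)(1 - w + w^2) = 1 + w^3.\<close>
  define y :: "int poly" where "y = [:0, 1:] ^ 5 ^ (k - 1)"
  define s where "s = y - 1"
  define w where "w = 2 * s + 2 * s ^ 2 + s ^ 3"
  obtain T where T: "s = [:-1, 1:] * T"
    using power_diff_1_eq[of "[:0, 1::int:]" "5 ^ (k - 1)"] by (auto simp: s_def y_def one_pCons)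
  have "cyclotomic5 k = 1 + y * (1 + y * (1 + y * (1 + y)))"
    by (simp add: cyclotomic5_def y_def pcompose_pCons one_pCons)
  also have "y = 1 + s" by (simp add: s_def)
  finally have "5 = cyclotomic5 k * (1 - w + w ^ 2)
      + s ^ 3 * (- s * (1 - w + w ^ 2) - 5 * (2 + 2 * s + s ^ 2) ^ 3)"
    by (simp add: w_def algebra_simps power2_eq_square power3_eq_cube)
  then show ?thesis
    unfolding T power_mult_distrib mult.assoc by blast
qed

lemma cong_t3_5_1_decomp:
  assumes "cong_t3_5 P 1"
  shows "\<exists>h S. P = 1 + [:-1, 1:] ^ 3 * h + cyclotomic5 k * S"
proof -
  obtain A B where "P - 1 = [:-1, 1:] ^ 3 * A + 5 * B"
    using assms unfolding cong_t3_5_def by blast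
  moreover obtain A5 B5 where "(5 :: int poly) = cyclotomic5 k * A5 + [:-1, 1:] ^ 3 * B5"
    using five_in_ideal_cyclotomic5_t3 by blast
  ultimately have "P = 1 + [:-1, 1:] ^ 3 * (A + B5 * B) + cyclotomic5 k * (A5 * B)"
    by (simp add: algebra_simps)
  then show ?thesis by blast
qed

lemma Nk_eq_Nk_1_plus_t3:
  assumes k: "k \<ge> 1" and m5: "\<not> 5 dvd m" and m: "of_int m = Nk k f"
  shows "\<exists>h. of_int m = Nk k (1 + [:-1, 1:] ^ 3 * h)"
proof -
  have "\<not> 5 dvd poly f 1"
  proof
    assume "5 dvd poly f 1"
    also have "poly f 1 dvd poly f 1 ^ (4 * 5 ^ (k - 1))" by simp
    finally have "5 dvd poly f 1 ^ (4 * 5 ^ (k - 1))" .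
    with Nk_cong_poly_1_power[OF k m] show False
      using m5 by (simp add: cong_dvd_iff)
  qed
  then obtain a b where "cong_t3_5 ([:1, 1:] ^ a * [:0, 1:] ^ b * f) 1"
    using exists_unit_multiple_cong_t3_5_1 by blast
  then obtain h S
    where eq: "[:1, 1:] ^ a * [:0, 1:] ^ b * f = 1 + [:-1, 1:] ^ 3 * h + cyclotomic5 k * S"
    using cong_t3_5_1_decomp by blast
  have "Nk k (1 + [:-1, 1:] ^ 3 * h) = Nk k ([:1, 1:] ^ a * [:0, 1:] ^ b * f)"
    by (simp add: eq Nk_add_cyclotomic5_mult[OF k])
  also have "\<dots> = Nk k f"
    by (simp add: Nk_mult Nk_power Nk_X[OF k] Nk_1_plus_X[OF k])
  finally show ?thesis using m by metis
qed

lemma five_mult_Nk1_1_plus_t3: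
  assumes m: "of_int m = Nk 1 (1 + [:-1, 1:] ^ 3 * h)"
  shows "\<exists>g. of_int (5 * m) = Nk 1 ([:1, -1:] + smult 5 g) \<and> poly g 1 = poly h 1"
proof -
  define t :: "int poly" where "t = [:-1, 1:]"
  define g where "g = (1 + 2 * t + 2 * t ^ 2 + t ^ 3) * h"
  have "cyclotomic5 1 = 1 + (1 + t) * (1 + (1 + t) * (1 + (1 + t) * (1 + (1 + t))))"
    by (simp add: cyclotomic5_def t_def pcompose_pCons one_pCons)
  then have "- t * (1 + t ^ 3 * h) = (- t + 5 * g) + cyclotomic5 1 * - h"
    by (simp add: g_def algebra_simps power2_eq_square power3_eq_cube)
  moreover have "[:1, -1:] = - t" "smult 5 g = 5 * g"
    by (simp_all add: t_def numeral_poly)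
  ultimately have "Nk 1 ([:1, -1:] + smult 5 g) = Nk 1 [:1, -1:] * Nk 1 (1 + t ^ 3 * h)"
    by (metis Nk_add_cyclotomic5_mult Nk_mult order_refl)
  also have "\<dots> = of_int (5 * m)"
    by (simp add: Nk_1_minus_X m t_def)
  finally show ?thesis
    by (intro exI[of _ g]) (simp add: g_def t_def)
qed

theorem lemma3p2:
  fixes i :: nat and m :: int
  assumes "i \<ge> 1"
    and "\<not> (5::int) dvd m"
    and "\<exists>f :: int poly. of_int m = Nk i f"
  shows "(\<exists>h :: int poly. of_int m = Nk i (1 + [:-1, 1:] ^ 3 * h))
       \<and> (i = 1 \<longrightarrow>
           (\<forall>h :: int poly. of_int m = Nk 1 (1 + [:-1, 1:] ^ 3 * h) \<longrightarrow>
              (\<exists>g :: int poly. of_int (5 * m) = Nk 1 ([:1, -1:] + smult 5 g)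
                 \<and> (\<not> (5::int) dvd poly h 1 \<longrightarrow> \<not> (5::int) dvd poly g 1))))"
proof (intro conjI impI allI)
  show "\<exists>h. of_int m = Nk i (1 + [:-1, 1:] ^ 3 * h)"
    using Nk_eq_Nk_1_plus_t3[OF assms(1,2)] assms(3) by blast
next
  fix h assume "of_int m = Nk 1 (1 + [:-1, 1:] ^ 3 * h)"
  then obtain g where "of_int (5 * m) = Nk 1 ([:1, -1:] + smult 5 g)" "poly g 1 = poly h 1"
    using five_mult_Nk1_1_plus_t3 by blast
  then show "\<exists>g. of_int (5 * m) = Nk 1 ([:1, -1:] + smult 5 g)
      \<and> (\<not> 5 dvd poly h 1 \<longrightarrow> \<not> 5 dvd poly g 1)" by auto
qed

end
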